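(* Let $n\ge1$, $\vec m=(m_1,\dots,m_n)\in\mathbb{N}^n$ and $1\le j\le n$. For every $w\in\mathbb{Q}_{\ge0}$, $$N_{\Delta(G^j_{n,\vec m})}(w)=2\,N_{\Delta(G^{j-1}_{n,\vec m})}(w)-N_{\Delta(G^{j-1}_{n-1,(m_1,\dots,\widehat{m_j},\dots,m_n)})}(w),$$ where the last polytope lives in $\mathbb{R}^{n-1}$ (coordinates $x_1,\dots,\widehat{x_j},\dots,x_n$), and for $n=1$ it is the zero-dimensional polytope $\{0\}\subset\mathbb{R}^0$, for which $N(w)=1$ if $w=0$ and $N(w)=0$ otherwise.
   Context: For $\vec m\in\mathbb N^n$ and $0\le j\le n$, $G^j_{n,\vec m}=x_1^{m_1}+\dots+x_n^{m_n}+x_1^{-m_1}+\dots+x_j^{-m_j}$, and $\Delta(G^j_{n,\vec m})$ is its Newton polytope, the convex hull of $\vec 0$, $m_ie_i$ ($1\le i\le n$) and $-m_ie_i$ ($1\le i\le j$). For a polytope $\Delta\subset\mathbb{R}^n$ containing $\vec0$, the weight $w_\Delta(u)$ of $u\in\mathbb{Q}^n$ is the smallest $c\in\mathbb{Q}_{\ge0}$ with $u\in c\Delta$ ($\infty$ if none), and $N_\Delta(w)=\#\{u\in\mathbb{Z}^n: w_\Delta(u)=w\}$. *)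

theory Defs
  imports Complex_Main
begin

text \<open>Points of R^n are represented as functions nat => real whose coordinates
  are indexed 1..n (coordinates outside 1..n are irrelevant / zero for lattice points).\<close>

definition conv_hull :: "(nat \<Rightarrow> real) set \<Rightarrow> (nat \<Rightarrow> real) set" where
  "conv_hull V = {x. \<exists>F a. F \<subseteq> V \<and> finite F \<and> F \<noteq> {} \<and> (\<forall>v\<in>F. a v \<ge> 0) \<and>
       sum a F = 1 \<and> x = (\<lambda>k. \<Sum>v\<in>F. a v * v k)}"

definition unitv :: "nat \<Rightarrow> nat \<Rightarrow> real" where
  "unitv i = (\<lambda>k. if k = i then 1 else 0)"

definition scaleset :: "real \<Rightarrow> (nat \<Rightarrow> real) set \<Rightarrow> (nat \<Rightarrow> real) set" where
  "scaleset c S = (\<lambda>x. (\<lambda>k. c * x k)) ` S"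

definition newtonG :: "nat \<Rightarrow> (nat \<Rightarrow> nat) \<Rightarrow> nat \<Rightarrow> (nat \<Rightarrow> real) set" where
  "newtonG n m j = conv_hull ({\<lambda>k. 0} \<union> {(\<lambda>k. real (m i) * unitv i k) | i. 1 \<le> i \<and> i \<le> n}
                                     \<union> {(\<lambda>k. - real (m i) * unitv i k) | i. 1 \<le> i \<and> i \<le> j})"

definition has_weight :: "(nat \<Rightarrow> real) set \<Rightarrow> (nat \<Rightarrow> real) \<Rightarrow> rat \<Rightarrow> bool" where
  "has_weight D u w \<longleftrightarrow> w \<ge> 0 \<and> u \<in> scaleset (of_rat w) D \<and>
     (\<forall>c::rat. c \<ge> 0 \<and> u \<in> scaleset (of_rat c) D \<longrightarrow> w \<le> c)"

definition lattice :: "nat \<Rightarrow> (nat \<Rightarrow> int) set" where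
  "lattice n = {u. \<forall>k. (k < 1 \<or> k > n) \<longrightarrow> u k = 0}"

definition Ncount :: "nat \<Rightarrow> (nat \<Rightarrow> real) set \<Rightarrow> rat \<Rightarrow> nat" where
  "Ncount n D w = card {u \<in> lattice n. has_weight D (\<lambda>k. real_of_int (u k)) w}"

end

theory Submission
  imports Defs "HOL-Library.FuncSet"
begin

(* For positive m_1..m_n and j <= n, the Newton polytope Delta(G^j_{n,m}) is
   the set of points y supported on the coordinates 1..n with y_i >= 0 for j < i <= n and
   sum_i |y_i|/m_i <= 1.  Hence a lattice point u has weight w iff u_i >= 0 for j < i <= n
   and sum_i |u_i|/m_i = w, and N(w) is the cardinality of this finite "weight shell".
   Splitting the shell for j by the sign of u_j: the part with u_j >= 0 is the shell for
   j - 1; the reflection u_j -> -u_j matches the parts u_j > 0 and u_j < 0; and deleting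
   the j-th coordinate identifies the part u_j = 0 with the shell of the polytope in
   dimension n - 1.  Counting gives N^j = 2 N^{j-1} - N'^{j-1}. *)

section \<open>The Newton polytope as a weighted cross-polytope\<close>

definition vertices :: "nat \<Rightarrow> (nat \<Rightarrow> nat) \<Rightarrow> nat \<Rightarrow> (nat \<Rightarrow> real) set" where
  "vertices n m j = {\<lambda>k. 0} \<union> {(\<lambda>k. real (m i) * unitv i k) | i. 1 \<le> i \<and> i \<le> n}
                               \<union> {(\<lambda>k. - real (m i) * unitv i k) | i. 1 \<le> i \<and> i \<le> j}"

lemma newtonG_vertices: "newtonG n m j = conv_hull (vertices n m j)"
  unfolding newtonG_def vertices_def ..

definition nonneg_beyond :: "nat \<Rightarrow> nat \<Rightarrow> (nat \<Rightarrow> 'a::{zero,ord}) \<Rightarrow> bool" where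
  "nonneg_beyond j n y \<longleftrightarrow> (\<forall>i. j < i \<and> i \<le> n \<longrightarrow> 0 \<le> y i)"

text \<open>The weighted l1-norm whose unit ball (intersected with the sign constraint) is the polytope.\<close>
definition wnorm :: "nat \<Rightarrow> (nat \<Rightarrow> nat) \<Rightarrow> (nat \<Rightarrow> real) \<Rightarrow> real" where
  "wnorm n m y = (\<Sum>i=1..n. \<bar>y i\<bar> / real (m i))"

definition supported :: "nat \<Rightarrow> (nat \<Rightarrow> real) \<Rightarrow> bool" where
  "supported n y \<longleftrightarrow> (\<forall>k. k < 1 \<or> n < k \<longrightarrow> y k = 0)"

lemma wnorm_scaled_unit:
  assumes "i \<in> {1..n}" "m i \<ge> 1"
  shows "wnorm n m (\<lambda>k. c * real (m i) * unitv i k) = \<bar>c\<bar>"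
proof -
  have "wnorm n m (\<lambda>k. c * real (m i) * unitv i k) = (\<Sum>k=1..n. if k = i then \<bar>c\<bar> else 0)"
    unfolding wnorm_def
    by (rule sum.cong) (use assms in \<open>auto simp: unitv_def abs_mult\<close>)
  also have "\<dots> = \<bar>c\<bar>" using assms by simp
  finally show ?thesis .
qed

lemma vertex_bound:
  assumes m: "\<forall>i. 1 \<le> i \<and> i \<le> n \<longrightarrow> m i \<ge> 1" and v: "v \<in> vertices n m j"
  shows "nonneg_beyond j n v \<and> wnorm n m v \<le> 1"
  using v unfolding vertices_def
proof (elim UnE)
  assume "v \<in> {\<lambda>k. 0}" then show ?thesis by (auto simp: nonneg_beyond_def wnorm_def)
next
  assume "v \<in> {(\<lambda>k. real (m i) * unitv i k) | i. 1 \<le> i \<and> i \<le> n}"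
  then obtain i where i: "1 \<le> i" "i \<le> n" and v_eq: "v = (\<lambda>k. 1 * real (m i) * unitv i k)"
    by auto
  have "wnorm n m v = 1" unfolding v_eq using wnorm_scaled_unit[of i n m 1] i m by simp
  then show ?thesis by (auto simp: v_eq unitv_def nonneg_beyond_def)
next
  assume "v \<in> {(\<lambda>k. - real (m i) * unitv i k) | i. 1 \<le> i \<and> i \<le> j}"
  then obtain i where i: "1 \<le> i" "i \<le> j" and v_eq: "v = (\<lambda>k. (-1) * real (m i) * unitv i k)"
    by auto
  have "wnorm n m v \<le> 1"
  proof (cases "i \<le> n")
    case True
    then show ?thesis unfolding v_eq using wnorm_scaled_unit[of i n m "-1"] i m by simp
  next
    case False
    then show ?thesis by (simp add: v_eq unitv_def wnorm_def)
  qed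
  then show ?thesis using i by (auto simp: v_eq unitv_def nonneg_beyond_def)
qed

text \<open>Both constraints are convex, so they pass from the vertices to their convex hull.\<close>
lemma newtonG_bound:
  assumes m: "\<forall>i. 1 \<le> i \<and> i \<le> n \<longrightarrow> m i \<ge> 1" and y: "y \<in> newtonG n m j"
  shows "nonneg_beyond j n y \<and> wnorm n m y \<le> 1"
proof -
  obtain F a where F: "F \<subseteq> vertices n m j" "finite F"
    and a: "\<forall>v\<in>F. a v \<ge> 0" "sum a F = 1" and y_eq: "y = (\<lambda>k. \<Sum>v\<in>F. a v * v k)"
    using y unfolding newtonG_vertices conv_hull_def by blast
  have vb: "nonneg_beyond j n v" "wnorm n m v \<le> 1" if "v \<in> F" for v
    using vertex_bound[OF m] F that by blast+
  have signs: "nonneg_beyond j n y"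
    using vb(1) a unfolding y_eq nonneg_beyond_def by (auto intro!: sum_nonneg)
  have "wnorm n m y \<le> (\<Sum>i=1..n. (\<Sum>v\<in>F. a v * \<bar>v i\<bar>) / real (m i))"
    unfolding wnorm_def
  proof (rule sum_mono)
    fix i
    have "\<bar>y i\<bar> \<le> (\<Sum>v\<in>F. \<bar>a v * v i\<bar>)" unfolding y_eq by (rule sum_abs)
    also have "\<dots> = (\<Sum>v\<in>F. a v * \<bar>v i\<bar>)" using a by (intro sum.cong) (auto simp: abs_mult)
    finally show "\<bar>y i\<bar> / real (m i) \<le> (\<Sum>v\<in>F. a v * \<bar>v i\<bar>) / real (m i)"
      by (simp add: divide_right_mono)
  qed
  also have "\<dots> = (\<Sum>i=1..n. \<Sum>v\<in>F. a v * (\<bar>v i\<bar> / real (m i)))"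
    by (simp add: sum_divide_distrib)
  also have "\<dots> = (\<Sum>v\<in>F. a v * wnorm n m v)"
    unfolding wnorm_def by (subst sum.swap) (simp add: sum_distrib_left)
  also have "\<dots> \<le> (\<Sum>v\<in>F. a v * 1)"
    using vb(2) a by (intro sum_mono mult_left_mono) auto
  also have "\<dots> = 1" using a by simp
  finally show ?thesis using signs by simp
qed

text \<open>If 0 is one of the points, every combination of points with nonnegative weights of
  total at most 1 lies in the convex hull (the missing weight goes to 0).  The points need
  not be distinct: coinciding points have their weights merged.\<close>
lemma conv_hull_subconvex:
  assumes zero: "(\<lambda>k. 0) \<in> V" and I: "finite I" and p: "p ` I \<subseteq> V"
    and c: "\<forall>i\<in>I. c i \<ge> 0" "sum c I \<le> 1"
  shows "(\<lambda>k. \<Sum>i\<in>I. c i * p i k) \<in> conv_hull V"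
proof -
  define z :: "nat \<Rightarrow> real" where "z = (\<lambda>k. 0)"
  define F where "F = insert z (p ` I)"
  define a where "a v = (if v = z then 1 - sum c I else 0) + (\<Sum>i | i \<in> I \<and> p i = v. c i)" for v
  have F: "F \<subseteq> V" "finite F" "p ` I \<subseteq> F" "z \<in> F"
    using zero p I by (auto simp: F_def z_def)
  have "\<forall>v\<in>F. a v \<ge> 0" using c by (auto simp: a_def intro!: sum_nonneg add_nonneg_nonneg)
  moreover have "sum a F = 1"
  proof -
    have "sum a F = (\<Sum>v\<in>F. if v = z then 1 - sum c I else 0)
                    + (\<Sum>v\<in>F. \<Sum>i | i \<in> I \<and> p i = v. c i)"
      unfolding a_def by (rule sum.distrib)
    also have "\<dots> = (1 - sum c I) + sum c I"
      using F(2,4) sum.group[OF I F(2,3), of c] by (simp add: sum.delta')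
    finally show ?thesis by simp
  qed
  moreover have "(\<lambda>k. \<Sum>i\<in>I. c i * p i k) = (\<lambda>k. \<Sum>v\<in>F. a v * v k)"
  proof
    fix k
    have "a v * v k = (\<Sum>i | i \<in> I \<and> p i = v. c i * p i k)" for v
    proof -
      have "(\<Sum>i | i \<in> I \<and> p i = v. c i * p i k) = (\<Sum>i | i \<in> I \<and> p i = v. c i * v k)"
        by (rule sum.cong) auto
      then show ?thesis by (simp add: a_def z_def distrib_right sum_distrib_right)
    qed
    then have "(\<Sum>v\<in>F. a v * v k) = (\<Sum>v\<in>F. \<Sum>i | i \<in> I \<and> p i = v. c i * p i k)"
      by simp
    also have "\<dots> = (\<Sum>i\<in>I. c i * p i k)" by (rule sum.group[OF I F(2,3)])
    finally show "(\<Sum>i\<in>I. c i * p i k) = (\<Sum>v\<in>F. a v * v k)" by simp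
  qed
  ultimately show ?thesis
    unfolding conv_hull_def using F(1,2,4) by (intro CollectI exI[of _ F] exI[of _ a]) auto
qed

text \<open>Conversely, a point obeying both constraints is the subconvex combination of the
  vertices sgn(y_i) m_i e_i with weights |y_i|/m_i.\<close>
lemma newtonG_memI:
  assumes m: "\<forall>i. 1 \<le> i \<and> i \<le> n \<longrightarrow> m i \<ge> 1" and supp: "supported n y"
    and signs: "nonneg_beyond j n y" and norm: "wnorm n m y \<le> 1"
  shows "y \<in> newtonG n m j"
proof -
  define p where "p i = (\<lambda>k. (if y i < 0 then - real (m i) else real (m i)) * unitv i k)" for i
  define c where "c i = \<bar>y i\<bar> / real (m i)" for i
  have p_vertices: "p ` {1..n} \<subseteq> vertices n m j"
  proof clarify
    fix i assume i: "i \<in> {1..n}"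
    show "p i \<in> vertices n m j"
    proof (cases "y i < 0")
      case True
      have "i \<le> j"
      proof (rule ccontr)
        assume "\<not> i \<le> j"
        then have "0 \<le> y i" using signs i by (auto simp: nonneg_beyond_def)
        then show False using True by simp
      qed
      then show ?thesis using i True unfolding vertices_def p_def by auto
    next
      case False
      then show ?thesis using i unfolding vertices_def p_def by auto
    qed
  qed
  have zero_vertex: "(\<lambda>k. 0) \<in> vertices n m j" by (simp add: vertices_def)
  have "sum c {1..n} \<le> 1" using norm by (simp add: c_def wnorm_def)
  then have "(\<lambda>k. \<Sum>i\<in>{1..n}. c i * p i k) \<in> conv_hull (vertices n m j)"
    using conv_hull_subconvex[OF zero_vertex finite_atLeastAtMost p_vertices, of c]
    by (simp add: c_def)
  moreover have "(\<lambda>k. \<Sum>i\<in>{1..n}. c i * p i k) = y"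
  proof
    fix k
    have "(\<Sum>i\<in>{1..n}. c i * p i k) = (if k \<in> {1..n} then c k * p k k else 0)"
      by (simp add: p_def unitv_def if_distrib[of "\<lambda>x. _ * x"] sum.delta cong: if_cong)
    also have "\<dots> = y k"
    proof (cases "k \<in> {1..n}")
      case True
      then have "m k \<ge> 1" using m by auto
      then show ?thesis using True by (auto simp: c_def p_def unitv_def)
    next
      case False
      then have "k < 1 \<or> n < k" by auto
      then show ?thesis using supp False unfolding supported_def by auto
    qed
    finally show "(\<Sum>i\<in>{1..n}. c i * p i k) = y k" .
  qed
  ultimately show ?thesis by (simp add: newtonG_vertices)
qed

text \<open>The weighted norm is definite on points of R^n; this settles the dilate by 0.\<close>
lemma supported_wnorm_le_0:
  assumes m: "\<forall>i. 1 \<le> i \<and> i \<le> n \<longrightarrow> m i \<ge> 1" and "supported n x" and "wnorm n m x \<le> 0"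
  shows "x = (\<lambda>k. 0)"
proof
  fix k
  have terms: "\<forall>i\<in>{1..n}. \<bar>x i\<bar> / real (m i) = 0"
    using assms(3) sum_nonneg_eq_0_iff[of "{1..n}" "\<lambda>i. \<bar>x i\<bar> / real (m i)"]
    by (simp add: wnorm_def order.antisym sum_nonneg)
  show "x k = 0"
  proof (cases "k \<in> {1..n}")
    case True
    then have "\<bar>x k\<bar> / real (m k) = 0" "m k \<ge> 1" using terms m by auto
    then show ?thesis by simp
  next
    case False
    then have "k < 1 \<or> n < k" by auto
    then show ?thesis using assms(2) unfolding supported_def by blast
  qed
qed

lemma scaled_newtonG_iff:
  assumes m: "\<forall>i. 1 \<le> i \<and> i \<le> n \<longrightarrow> m i \<ge> 1" and c: "c \<ge> 0" and supp: "supported n x"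
  shows "x \<in> scaleset c (newtonG n m j) \<longleftrightarrow> nonneg_beyond j n x \<and> wnorm n m x \<le> c"
proof
  assume "x \<in> scaleset c (newtonG n m j)"
  then obtain y where y: "y \<in> newtonG n m j" and x_eq: "x = (\<lambda>k. c * y k)"
    unfolding scaleset_def by auto
  have "wnorm n m x = c * wnorm n m y"
    unfolding x_eq wnorm_def using c by (simp add: sum_distrib_left abs_mult)
  also have "\<dots> \<le> c" using newtonG_bound[OF m y] c by (simp add: mult_left_le)
  finally show "nonneg_beyond j n x \<and> wnorm n m x \<le> c"
    using newtonG_bound[OF m y] c unfolding x_eq by (auto simp: nonneg_beyond_def)
next
  assume h: "nonneg_beyond j n x \<and> wnorm n m x \<le> c"
  show "x \<in> scaleset c (newtonG n m j)"
  proof (cases "c = 0")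
    case True
    then have "x = (\<lambda>k. c * 0)" using supported_wnorm_le_0[OF m supp] h by simp
    moreover have "(\<lambda>k. 0) \<in> newtonG n m j"
      by (rule newtonG_memI[OF m]) (auto simp: supported_def nonneg_beyond_def wnorm_def)
    ultimately show ?thesis unfolding scaleset_def by (rule image_eqI[where x = "\<lambda>k. 0"])
  next
    case False
    define y where "y = (\<lambda>k. x k / c)"
    have "wnorm n m y = wnorm n m x / c"
      unfolding y_def wnorm_def using c by (simp add: sum_divide_distrib mult.commute)
    then have "y \<in> newtonG n m j"
      using h c False supp
      by (intro newtonG_memI[OF m])
         (auto simp: y_def supported_def nonneg_beyond_def divide_le_eq_1)
    moreover have "x = (\<lambda>k. c * y k)" using False by (simp add: y_def)
    ultimately show ?thesis unfolding scaleset_def by blast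
  qed
qed

definition lattice_weight :: "nat \<Rightarrow> (nat \<Rightarrow> nat) \<Rightarrow> (nat \<Rightarrow> int) \<Rightarrow> rat" where
  "lattice_weight n m u = (\<Sum>i=1..n. of_int \<bar>u i\<bar> / of_nat (m i))"

lemma lattice_weight_real:
  "real_of_rat (lattice_weight n m u) = wnorm n m (\<lambda>k. real_of_int (u k))"
  unfolding lattice_weight_def wnorm_def by (simp add: of_rat_sum of_rat_divide flip: abs_of_rat)

lemma lattice_weight_nonneg: "lattice_weight n m u \<ge> 0"
  unfolding lattice_weight_def by (auto intro!: sum_nonneg)

text \<open>For Delta = Delta(G^j_{n,m}) the infimum in the definition of the weight is attained
  at the weighted norm, provided the sign constraint holds (otherwise the weight is infinite).\<close>
lemma has_weight_newtonG_iff: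
  assumes m: "\<forall>i. 1 \<le> i \<and> i \<le> n \<longrightarrow> m i \<ge> 1" and u: "u \<in> lattice n"
  shows "has_weight (newtonG n m j) (\<lambda>k. real_of_int (u k)) w \<longleftrightarrow>
     nonneg_beyond j n u \<and> lattice_weight n m u = w"
proof -
  have supp: "supported n (\<lambda>k. real_of_int (u k))" using u by (simp add: lattice_def supported_def)
  have signs: "nonneg_beyond j n (\<lambda>k. real_of_int (u k)) \<longleftrightarrow> nonneg_beyond j n u"
    by (simp add: nonneg_beyond_def)
  have scaled: "(\<lambda>k. real_of_int (u k)) \<in> scaleset (of_rat c) (newtonG n m j) \<longleftrightarrow>
     nonneg_beyond j n u \<and> lattice_weight n m u \<le> c" if "c \<ge> 0" for c
    using scaled_newtonG_iff[OF m _ supp, of "of_rat c" j] that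
    by (simp add: signs zero_le_of_rat_iff of_rat_less_eq flip: lattice_weight_real)
  show ?thesis
    unfolding has_weight_def using scaled lattice_weight_nonneg
    by (meson order.antisym order.refl order.trans)
qed

definition shell :: "nat \<Rightarrow> (nat \<Rightarrow> nat) \<Rightarrow> nat \<Rightarrow> rat \<Rightarrow> (nat \<Rightarrow> int) set" where
  "shell n m j w = {u \<in> lattice n. nonneg_beyond j n u \<and> lattice_weight n m u = w}"

lemma Ncount_eq_card_shell:
  assumes m: "\<forall>i. 1 \<le> i \<and> i \<le> n \<longrightarrow> m i \<ge> 1"
  shows "Ncount n (newtonG n m j) w = card (shell n m j w)"
  unfolding Ncount_def shell_def using has_weight_newtonG_iff[OF m] by (metis (lifting))

text \<open>Shells are finite: each coordinate is bounded by w * sum_i m_i.\<close>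
lemma finite_shell:
  assumes m: "\<forall>i. 1 \<le> i \<and> i \<le> n \<longrightarrow> m i \<ge> 1"
  shows "finite (shell n m j w)"
proof -
  define B where "B = \<lceil>w * of_nat (\<Sum>i=1..n. m i)\<rceil>"
  define ext where "ext f = (\<lambda>k. if k \<in> {1..n} then f k else (0::int))" for f :: "nat \<Rightarrow> int"
  have "shell n m j w \<subseteq> ext ` (PiE {1..n} (\<lambda>_. {-B..B}))"
  proof
    fix u assume u: "u \<in> shell n m j w"
    have bound: "\<bar>u i\<bar> \<le> B" if i: "i \<in> {1..n}" for i
    proof -
      have "of_int \<bar>u i\<bar> / of_nat (m i) \<le> lattice_weight n m u"
        unfolding lattice_weight_def by (rule member_le_sum) (use i in auto)
      moreover have "(0::rat) < of_nat (m i)" using m i by auto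
      ultimately have "(of_int \<bar>u i\<bar> :: rat) \<le> w * of_nat (m i)"
        using u by (simp add: shell_def pos_divide_le_eq)
      also have "\<dots> \<le> w * of_nat (\<Sum>i=1..n. m i)"
      proof (rule mult_left_mono)
        show "(of_nat (m i) :: rat) \<le> of_nat (\<Sum>i=1..n. m i)"
          using i by (subst of_nat_le_iff) (rule member_le_sum, auto)
        show "0 \<le> w" using u lattice_weight_nonneg[of n m u] by (simp add: shell_def)
      qed
      finally show ?thesis unfolding B_def by (meson le_of_int_ceiling order_trans of_int_le_iff)
    qed
    have "u = ext (restrict u {1..n})"
    proof
      fix k
      have "k < 1 \<or> n < k \<longrightarrow> u k = 0" using u by (simp add: shell_def lattice_def)
      then show "u k = ext (restrict u {1..n}) k" by (cases "k = 0") (auto simp: ext_def)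
    qed
    moreover have "restrict u {1..n} \<in> PiE {1..n} (\<lambda>_. {-B..B})"
      using bound by (force simp: abs_le_iff)
    ultimately show "u \<in> ext ` (PiE {1..n} (\<lambda>_. {-B..B}))" by blast
  qed
  moreover have "finite (ext ` (PiE {1..n} (\<lambda>_. {-B..B})))"
    by (intro finite_imageI finite_PiE) auto
  ultimately show ?thesis by (rule finite_subset)
qed

section \<open>Deleting a coordinate\<close>

text \<open>skip j enumerates the indices other than j: 1..n-1 is mapped onto {1..n} - {j}.\<close>
definition skip :: "nat \<Rightarrow> nat \<Rightarrow> nat" where
  "skip j i = (if i < j then i else Suc i)"

definition insert_zero :: "nat \<Rightarrow> (nat \<Rightarrow> int) \<Rightarrow> nat \<Rightarrow> int" where
  "insert_zero j v = (\<lambda>k. if k < j then v k else if k = j then 0 else v (k - 1))"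

lemma insert_zero_skip: "insert_zero j v \<circ> skip j = v"
  by (auto simp: insert_zero_def skip_def)

lemma skip_insert_zero: "u j = 0 \<Longrightarrow> insert_zero j (u \<circ> skip j) = u"
  by (auto simp: insert_zero_def skip_def fun_eq_iff)

lemma sum_skip:
  assumes "1 \<le> j" "j \<le> n"
  shows "(\<Sum>i=1..n. f i) = f j + (\<Sum>i=1..n-1. f (skip j i))"
proof -
  have "inj_on (skip j) {1..n-1}" by (auto simp: inj_on_def skip_def split: if_splits)
  moreover have "skip j ` {1..n-1} = {1..n} - {j}"
  proof
    show "skip j ` {1..n-1} \<subseteq> {1..n} - {j}" using assms by (auto simp: skip_def)
    show "{1..n} - {j} \<subseteq> skip j ` {1..n-1}"
    proof
      fix k assume k: "k \<in> {1..n} - {j}"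
      then have "k = skip j (if k < j then k else k - 1) \<and> (if k < j then k else k - 1) \<in> {1..n-1}"
        using assms by (auto simp: skip_def)
      then show "k \<in> skip j ` {1..n-1}" by blast
    qed
  qed
  ultimately have "(\<Sum>i=1..n-1. f (skip j i)) = (\<Sum>i\<in>{1..n} - {j}. f i)"
    by (metis sum.reindex comp_apply sum.cong)
  then show ?thesis using assms by (simp add: sum.remove)
qed

lemma lattice_weight_skip:
  assumes "1 \<le> j" "j \<le> n" "u j = 0"
  shows "lattice_weight (n - 1) (m \<circ> skip j) (u \<circ> skip j) = lattice_weight n m u"
  unfolding lattice_weight_def sum_skip[OF assms(1,2), of "\<lambda>i. of_int \<bar>u i\<bar> / of_nat (m i)"]
  using assms(3) by simp

lemma card_partition:
  "finite A \<Longrightarrow> card A = card {x\<in>A. P x} + card {x\<in>A. \<not> P x}"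
  by (subst card_Un_disjoint[symmetric]) (auto intro: arg_cong[where f = card])

lemma shell_pred:
  assumes "1 \<le> j" "j \<le> n"
  shows "shell n m (j - 1) w = {u \<in> shell n m j w. u j \<ge> 0}"
proof -
  have "j - 1 < i \<longleftrightarrow> i = j \<or> j < i" for i using assms(1) by arith
  then have "nonneg_beyond (j - 1) n u \<longleftrightarrow> nonneg_beyond j n u \<and> u j \<ge> 0" for u :: "nat \<Rightarrow> int"
    using assms(2) unfolding nonneg_beyond_def by auto
  then show ?thesis by (auto simp: shell_def)
qed

text \<open>Reflecting the j-th coordinate matches the parts u_j > 0 and u_j < 0 of the shell.\<close>
lemma card_shell_negative:
  assumes "1 \<le> j" "j \<le> n"
  shows "card {u \<in> shell n m j w. u j < 0} = card {u \<in> shell n m j w. u j > 0}"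
proof -
  define refl where "refl u = u(j := - u j)" for u :: "nat \<Rightarrow> int"
  have weight: "lattice_weight n m (u(j := - u j)) = lattice_weight n m u" for u
    unfolding lattice_weight_def by (intro sum.cong) auto
  have "bij_betw refl {u \<in> shell n m j w. u j < 0} {u \<in> shell n m j w. u j > 0}"
    by (rule bij_betw_byWitness[where f' = refl])
       (use assms in \<open>auto simp: refl_def shell_def lattice_def nonneg_beyond_def weight\<close>)
  then show ?thesis by (rule bij_betw_same_card)
qed

text \<open>Deleting the j-th coordinate identifies the part u_j = 0 of the shell with the shell
  of the polytope in dimension n - 1 (the exponent m_j and the coordinate x_j removed).\<close>
lemma card_shell_zero:
  assumes "1 \<le> j" "j \<le> n"
  shows "card {u \<in> shell n m j w. u j = 0} = card (shell (n - 1) (m \<circ> skip j) (j - 1) w)"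
proof (rule bij_betw_same_card[of "\<lambda>u. u \<circ> skip j"], rule bij_betw_byWitness[where f' = "insert_zero j"])
  show "\<forall>u\<in>{u \<in> shell n m j w. u j = 0}. insert_zero j (u \<circ> skip j) = u"
    by (simp add: skip_insert_zero)
  show "\<forall>v\<in>shell (n - 1) (m \<circ> skip j) (j - 1) w. insert_zero j v \<circ> skip j = v"
    by (simp add: insert_zero_skip)
  show "(\<lambda>u. u \<circ> skip j) ` {u \<in> shell n m j w. u j = 0} \<subseteq> shell (n - 1) (m \<circ> skip j) (j - 1) w"
    using assms lattice_weight_skip[OF assms]
    by (auto simp: shell_def lattice_def nonneg_beyond_def skip_def)
  show "insert_zero j ` shell (n - 1) (m \<circ> skip j) (j - 1) w \<subseteq> {u \<in> shell n m j w. u j = 0}"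
  proof clarify
    fix v assume v: "v \<in> shell (n - 1) (m \<circ> skip j) (j - 1) w"
    have "insert_zero j v j = 0" by (simp add: insert_zero_def)
    from lattice_weight_skip[of j n "insert_zero j v" m, OF assms this]
    have "lattice_weight n m (insert_zero j v) = w"
      using v by (simp add: insert_zero_skip shell_def)
    moreover have "nonneg_beyond j n (insert_zero j v)"
      unfolding nonneg_beyond_def
    proof (intro allI impI)
      fix i assume i: "j < i \<and> i \<le> n"
      then have "j - 1 < i - 1 \<and> i - 1 \<le> n - 1" using assms by linarith
      then show "0 \<le> insert_zero j v i"
        using v i by (auto simp: shell_def nonneg_beyond_def insert_zero_def)
    qed
    ultimately show "insert_zero j v \<in> shell n m j w \<and> insert_zero j v j = 0"
      using v assms by (auto simp: shell_def lattice_def insert_zero_def)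
  qed
qed

theorem mainTheorem4:
  fixes n j :: nat and m :: "nat \<Rightarrow> nat" and w :: rat
  assumes "n \<ge> 1" and "\<forall>i. 1 \<le> i \<and> i \<le> n \<longrightarrow> m i \<ge> 1"
    and "1 \<le> j" and "j \<le> n" and "w \<ge> 0"
  shows "int (Ncount n (newtonG n m j) w)
       = 2 * int (Ncount n (newtonG n m (j - 1)) w)
         - int (Ncount (n - 1) (newtonG (n - 1) (\<lambda>i. if i < j then m i else m (i + 1)) (j - 1)) w)"
proof -
  note m = assms(2) and j = assms(3,4)
  have m': "(\<lambda>i. if i < j then m i else m (i + 1)) = m \<circ> skip j"
    by (auto simp: skip_def fun_eq_iff)
  have m'_pos: "\<forall>i. 1 \<le> i \<and> i \<le> n - 1 \<longrightarrow> (m \<circ> skip j) i \<ge> 1"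
    using m j by (auto simp: skip_def)
  define S where "S = shell n m j w"
  have fin: "finite S" "finite {u \<in> S. u j \<ge> 0}" using finite_shell[OF m] by (auto simp: S_def)
  have "card S = card {u \<in> S. u j \<ge> 0} + card {u \<in> S. u j < 0}"
    using card_partition[OF fin(1), of "\<lambda>u. u j \<ge> 0"] by (simp add: not_le)
  moreover have "card {u \<in> S. u j \<ge> 0} = card {u \<in> S. u j = 0} + card {u \<in> S. u j > 0}"
    using card_partition[OF fin(2), of "\<lambda>u. u j = 0"]
    by (auto intro!: arg_cong2[where f = "(+)"] arg_cong[where f = card])
  ultimately show ?thesis
    unfolding m' Ncount_eq_card_shell[OF m] Ncount_eq_card_shell[OF m'_pos]
    using shell_pred[OF j, of m w] card_shell_negative[OF j, of m w] card_shell_zero[OF j, of m w]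
    by (simp add: S_def)
qed

end
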